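(* If $G$ is a special grid operator and $k\in\mathbb Z$, then $G'=\sigma^kG\sigma^k$ is a special grid operator and moreover $G'^{\bullet}=(-\tau)^kG^\bullet\tau^k$.
   Context: Let $\omega=e^{i\pi/4}$, $\lambda=1+\sqrt2$, and $\mathbb Z[\omega]=\{a_0+a_1\omega+a_2\omega^2+a_3\omega^3: a_j\in\mathbb Z\}\subseteq\mathbb C\cong\mathbb R^2$. A grid operator is a real linear map $G:\mathbb R^2\to\mathbb R^2$ with $G(\mathbb Z[\omega])\subseteq\mathbb Z[\omega]$ (its entries lie in $\mathbb Q(\sqrt2)$); it is special if $\det G=\pm1$. For a matrix $M$ with entries in $\mathbb Q(\sqrt2)$, $M^\bullet$ is obtained by applying $(x+y\sqrt2)^\bullet=x-y\sqrt2$ to each entry. Let $\sigma=\sqrt{\lambda^{-1}}\begin{bmatrix}\lambda&0\\0&1\end{bmatrix}$ and $\tau=\sqrt{\lambda^{-1}}\begin{bmatrix}1&0\\0&-\lambda\end{bmatrix}$. *)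

theory Defs
  imports "HOL-Analysis.Analysis"
begin

definition omega :: complex where "omega = cis (pi / 4)"
definition lam :: real where "lam = 1 + sqrt 2"

definition Zomega :: "complex set" where
  "Zomega = {of_int a0 + of_int a1 * omega + of_int a2 * omega ^ 2 + of_int a3 * omega ^ 3
             | a0 a1 a2 a3 :: int. True}"

definition c2v :: "complex \<Rightarrow> real^2" where
  "c2v z = vector [Re z, Im z]"

definition grid_operator :: "real^2^2 \<Rightarrow> bool" where
  "grid_operator G \<longleftrightarrow> (\<forall>z\<in>Zomega. \<exists>w\<in>Zomega. G *v c2v z = c2v w)"

definition special_grid_operator :: "real^2^2 \<Rightarrow> bool" where
  "special_grid_operator G \<longleftrightarrow> grid_operator G \<and> (det G = 1 \<or> det G = -1)"

text \<open>sqrt 2-conjugation on Q(sqrt 2): (x + y sqrt 2)^bullet = x - y sqrt 2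
  (unique representation since sqrt 2 is irrational); identity outside Q(sqrt 2).\<close>
definition bul :: "real \<Rightarrow> real" where
  "bul r = (if \<exists>x y :: rat. r = of_rat x + of_rat y * sqrt 2
            then (THE s. \<exists>x y :: rat. r = of_rat x + of_rat y * sqrt 2 \<and> s = of_rat x - of_rat y * sqrt 2)
            else r)"

definition mat_bul :: "real^2^2 \<Rightarrow> real^2^2" where
  "mat_bul M = (\<chi> i j. bul (M $ i $ j))"

fun mat_pow :: "real^2^2 \<Rightarrow> nat \<Rightarrow> real^2^2" where
  "mat_pow M 0 = mat 1"
| "mat_pow M (Suc n) = M ** mat_pow M n"

definition mat_zpow :: "real^2^2 \<Rightarrow> int \<Rightarrow> real^2^2" where
  "mat_zpow M k = (if 0 \<le> k then mat_pow M (nat k) else mat_pow (matrix_inv M) (nat (- k)))"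

definition sigma :: "real^2^2" where
  "sigma = sqrt (inverse lam) *\<^sub>R vector [vector [lam, 0], vector [0, 1]]"

definition tau :: "real^2^2" where
  "tau = sqrt (inverse lam) *\<^sub>R vector [vector [1, 0], vector [0, - lam]]"

end

theory Submission
  imports Defs "HOL-Computational_Algebra.Primes"
begin

text \<open>Both \<open>\<sigma>\<close> and \<open>\<tau>\<close> are diagonal, so \<open>\<sigma>\<^sup>k G \<sigma>\<^sup>k\<close> is obtained from \<open>G\<close> by
  rescaling its first row by \<open>\<lambda>\<^sup>k\<close> and its second column by \<open>\<lambda>\<^sup>-\<^sup>k\<close>. Both rescalings map
  \<open>\<int>[\<omega>]\<close> into itself (since \<open>\<lambda>\<close> and \<open>\<lambda>\<^sup>-\<^sup>1 = \<surd>2 - 1\<close> do), and their determinants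
  cancel. The entries of a grid operator lie in \<open>\<rat>(\<surd>2)\<close>, where \<open>\<bullet>\<close> is a ring
  automorphism with \<open>\<lambda>\<^sup>\<bullet> = -\<lambda>\<^sup>-\<^sup>1\<close>; applying it turns the rescaling by \<open>\<lambda>\<^sup>k\<close>, \<open>\<lambda>\<^sup>-\<^sup>k\<close>
  into the one by \<open>(-\<lambda>\<^sup>-\<^sup>1)\<^sup>k\<close>, \<open>(-\<lambda>)\<^sup>k\<close>, which is exactly conjugation by \<open>-\<tau>\<close>, \<open>\<tau>\<close>.\<close>

lemma matrix_inv_eqI:
  fixes A B :: "'a::semiring_1^'n^'n"
  assumes "A ** B = mat 1" "B ** A = mat 1"
  shows "matrix_inv A = B"
proof -
  have "C = B" if "A ** C = mat 1 \<and> C ** A = mat 1" for C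
  proof -
    have "C = C ** (A ** B)" using assms by simp
    also have "\<dots> = (C ** A) ** B" by (simp add: matrix_mul_assoc)
    finally show ?thesis using that by simp
  qed
  then show ?thesis
    unfolding matrix_inv_def using assms by (blast intro: someI2)
qed

subsection \<open>Diagonal \<open>2 \<times> 2\<close> matrices\<close>

definition diag2 :: "real \<Rightarrow> real \<Rightarrow> real^2^2" where
  "diag2 x y = vector [vector [x, 0], vector [0, y]]"

lemma diag2_nth [simp]:
  "diag2 x y $ 1 $ 1 = x" "diag2 x y $ 1 $ 2 = 0" "diag2 x y $ 2 $ 1 = 0" "diag2 x y $ 2 $ 2 = y"
  by (simp_all add: diag2_def)

lemma mat2_eq_iff:
  "(A :: 'a^2^2) = B \<longleftrightarrow> A$1$1 = B$1$1 \<and> A$1$2 = B$1$2 \<and> A$2$1 = B$2$1 \<and> A$2$2 = B$2$2"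
  by (auto simp: vec_eq_iff forall_2)

lemma matrix_mult2_nth [simp]:
  "((A :: 'a::semiring_1^2^2) ** B) $ i $ j = A$i$1 * B$1$j + A$i$2 * B$2$j"
  by (simp add: matrix_matrix_mult_def sum_2)

lemma mat1_2_nth [simp]:
  "(mat 1 :: 'a::zero_neq_one^2^2) $ 1 $ 1 = 1" "(mat 1 :: 'a^2^2) $ 1 $ 2 = 0"
  "(mat 1 :: 'a^2^2) $ 2 $ 1 = 0" "(mat 1 :: 'a^2^2) $ 2 $ 2 = 1"
  by (simp_all add: mat_def)

lemma diag2_mult: "diag2 x y ** diag2 x' y' = diag2 (x * x') (y * y')"
  by (simp add: mat2_eq_iff)

lemma diag2_1_1: "diag2 1 1 = mat 1"
  by (simp add: mat2_eq_iff)

lemma det_diag2: "det (diag2 x y) = x * y"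
  by (simp add: det_2)

lemma mat_pow_diag2: "mat_pow (diag2 x y) n = diag2 (x ^ n) (y ^ n)"
  by (induction n) (simp_all add: diag2_1_1 diag2_mult)

lemma matrix_inv_diag2:
  assumes "x \<noteq> 0" "y \<noteq> 0"
  shows "matrix_inv (diag2 x y) = diag2 (inverse x) (inverse y)"
  using assms by (intro matrix_inv_eqI) (simp_all add: diag2_mult diag2_1_1)

lemma mat_zpow_diag2:
  assumes "x \<noteq> 0" "y \<noteq> 0"
  shows "mat_zpow (diag2 x y) k = diag2 (x powi k) (y powi k)"
  using assms
  by (simp add: mat_zpow_def matrix_inv_diag2 mat_pow_diag2 power_int_def power_inverse)

lemma diag2_mult_diag2_normalize:
  assumes "b * c = 1"
  shows "diag2 a b ** G ** diag2 c d = diag2 (a * c) 1 ** G ** diag2 1 (b * d)"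
proof -
  have "a * d = a * c * (b * d)" using assms by (simp add: algebra_simps)
  then show ?thesis using assms by (simp add: mat2_eq_iff algebra_simps)
qed

subsection \<open>The matrices \<open>\<sigma>\<close> and \<open>\<tau>\<close>\<close>

lemma lam_pos: "lam > 0"
  by (simp add: lam_def add_pos_nonneg)

lemma inverse_lam: "inverse lam = sqrt 2 - 1"
  by (rule inverse_unique) (simp add: lam_def algebra_simps)

lemma sqrt_inverse_mult_self:
  assumes "0 \<le> (x::real)" shows "sqrt (inverse x) * x = sqrt x"
  using assms by (simp add: real_sqrt_inverse real_div_sqrt flip: divide_inverse_commute)

lemma sigma_eq_diag2: "sigma = diag2 (sqrt lam) (inverse (sqrt lam))"
  using sqrt_inverse_mult_self[of lam] lam_pos
  by (simp add: mat2_eq_iff sigma_def real_sqrt_inverse)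

lemma tau_eq_diag2: "tau = diag2 (inverse (sqrt lam)) (- sqrt lam)"
  using sqrt_inverse_mult_self[of lam] lam_pos
  by (simp add: mat2_eq_iff tau_def real_sqrt_inverse)

lemma minus_tau_eq_diag2: "- tau = diag2 (- inverse (sqrt lam)) (sqrt lam)"
  by (simp add: mat2_eq_iff tau_eq_diag2)

lemma sigma_conj_eq:
  "mat_zpow sigma k ** G ** mat_zpow sigma k = diag2 (lam powi k) 1 ** G ** diag2 1 (lam powi (- k))"
proof -
  let ?r = "sqrt lam"
  have r: "?r \<noteq> 0" "?r * ?r = lam" "inverse ?r * inverse ?r = inverse lam"
    using lam_pos by (simp_all flip: inverse_mult_distrib)
  have unit: "inverse ?r powi k * ?r powi k = 1"
    using r(1) by (simp flip: power_int_mult_distrib)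
  have "mat_zpow sigma k ** G ** mat_zpow sigma k
      = diag2 (?r powi k) (inverse ?r powi k) ** G ** diag2 (?r powi k) (inverse ?r powi k)"
    using r by (simp add: sigma_eq_diag2 mat_zpow_diag2)
  also have "\<dots> = diag2 (lam powi k) 1 ** G ** diag2 1 (lam powi (- k))"
    unfolding diag2_mult_diag2_normalize[OF unit] power_int_minus power_int_inverse[symmetric]
    by (simp only: r flip: power_int_mult_distrib)
  finally show ?thesis .
qed

lemma minus_tau_conj_eq:
  "mat_zpow (- tau) k ** H ** mat_zpow tau k
     = diag2 ((- inverse lam) powi k) 1 ** H ** diag2 1 ((- lam) powi k)"
proof -
  let ?r = "sqrt lam"
  have r: "?r \<noteq> 0" "- inverse ?r * inverse ?r = - inverse lam" "?r * - ?r = - lam"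
    using lam_pos by (simp_all add: real_sqrt_mult_self flip: inverse_mult_distrib)
  have unit: "?r powi k * inverse ?r powi k = 1"
    using r(1) by (simp flip: power_int_mult_distrib)
  have "mat_zpow (- tau) k ** H ** mat_zpow tau k
      = diag2 ((- inverse ?r) powi k) (?r powi k) ** H ** diag2 (inverse ?r powi k) ((- ?r) powi k)"
    unfolding minus_tau_eq_diag2 unfolding tau_eq_diag2 using r by (simp add: mat_zpow_diag2)
  also have "\<dots> = diag2 ((- inverse lam) powi k) 1 ** H ** diag2 1 ((- lam) powi k)"
    unfolding diag2_mult_diag2_normalize[OF unit]
    by (simp only: r flip: power_int_mult_distrib)
  finally show ?thesis .
qed

subsection \<open>The ring \<open>\<int>[\<omega>]\<close> and grid operators\<close>

lemma sqrt2_mult_sqrt2: "sqrt 2 * (sqrt 2 * x) = 2 * (x::real)"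
  by (simp flip: mult.assoc)

lemma omega_eq: "omega = Complex (sqrt 2 / 2) (sqrt 2 / 2)"
  by (simp add: omega_def cis.ctr cos_45 sin_45)

lemma Zomega_iff:
  "z \<in> Zomega \<longleftrightarrow> (\<exists>a0 a1 a2 a3 :: int.
     Re z = of_int a0 + (of_int a1 - of_int a3) * sqrt 2 / 2
     \<and> Im z = of_int a2 + (of_int a1 + of_int a3) * sqrt 2 / 2)"
proof -
  have omega: "Re omega = sqrt 2 / 2" "Im omega = sqrt 2 / 2" "omega ^ 2 = \<i>"
    "omega ^ 3 = Complex (- sqrt 2 / 2) (sqrt 2 / 2)"
    by (simp_all add: omega_eq complex_eq_iff power2_eq_square power3_eq_cube)
  have "(z = of_int a0 + of_int a1 * omega + of_int a2 * omega ^ 2 + of_int a3 * omega ^ 3)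
    \<longleftrightarrow> Re z = of_int a0 + (of_int a1 - of_int a3) * sqrt 2 / 2
       \<and> Im z = of_int a2 + (of_int a1 + of_int a3) * sqrt 2 / 2"
    for a0 a1 a2 a3 :: int
    by (simp add: complex_eq_iff omega algebra_simps add_divide_distrib diff_divide_distrib)
  then show ?thesis unfolding Zomega_def by blast
qed

lemma Zomega_scale_Re_Im:
  assumes "z \<in> Zomega"
  shows "Complex (lam * Re z) (Im z) \<in> Zomega"
    and "Complex (inverse lam * Re z) (Im z) \<in> Zomega"
    and "Complex (Re z) (lam * Im z) \<in> Zomega"
    and "Complex (Re z) (inverse lam * Im z) \<in> Zomega"
proof -
  obtain a0 a1 a2 a3 :: int where z:
    "Re z = of_int a0 + (of_int a1 - of_int a3) * sqrt 2 / 2"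
    "Im z = of_int a2 + (of_int a1 + of_int a3) * sqrt 2 / 2"
    using assms by (auto simp: Zomega_iff)
  show "Complex (lam * Re z) (Im z) \<in> Zomega" unfolding Zomega_iff
    by (rule exI[of _ "a0 + a1 - a3"], rule exI[of _ "a1 + a0"], rule exI[of _ a2],
        rule exI[of _ "a3 - a0"]) (simp add: z lam_def field_simps sqrt2_mult_sqrt2)
  show "Complex (inverse lam * Re z) (Im z) \<in> Zomega" unfolding Zomega_iff inverse_lam
    by (rule exI[of _ "a1 - a3 - a0"], rule exI[of _ "a0 + a3"], rule exI[of _ a2],
        rule exI[of _ "a1 - a0"]) (simp add: z field_simps sqrt2_mult_sqrt2)
  show "Complex (Re z) (lam * Im z) \<in> Zomega" unfolding Zomega_iff
    by (rule exI[of _ a0], rule exI[of _ "a1 + a2"], rule exI[of _ "a2 + a1 + a3"],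
        rule exI[of _ "a3 + a2"]) (simp add: z lam_def field_simps sqrt2_mult_sqrt2)
  show "Complex (Re z) (inverse lam * Im z) \<in> Zomega" unfolding Zomega_iff inverse_lam
    by (rule exI[of _ a0], rule exI[of _ "a2 - a3"], rule exI[of _ "a1 + a3 - a2"],
        rule exI[of _ "a2 - a1"]) (simp add: z field_simps sqrt2_mult_sqrt2)
qed

lemma diag2_mult_c2v: "diag2 x y *v c2v z = c2v (Complex (x * Re z) (y * Im z))"
  by (simp add: c2v_def vec_eq_iff forall_2 matrix_vector_mult_def sum_2)

lemma grid_operator_diag2I:
  assumes "\<And>z. z \<in> Zomega \<Longrightarrow> Complex (x * Re z) (y * Im z) \<in> Zomega"
  shows "grid_operator (diag2 x y)"
  using assms unfolding grid_operator_def diag2_mult_c2v by blast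

lemma grid_operator_mult:
  "grid_operator A \<Longrightarrow> grid_operator B \<Longrightarrow> grid_operator (A ** B)"
  unfolding grid_operator_def by (metis matrix_vector_mul_assoc)

lemma grid_operator_diag2_lam_powi:
  "grid_operator (diag2 (lam powi k) 1)" "grid_operator (diag2 1 (lam powi k))"
proof (induction k rule: int_induct[where k = 0])
  case base
  show "grid_operator (diag2 (lam powi 0) 1)" "grid_operator (diag2 1 (lam powi 0))"
    by (simp_all add: grid_operator_diag2I)
next
  case (step1 i)
  have "diag2 (lam powi (i + 1)) 1 = diag2 lam 1 ** diag2 (lam powi i) 1"
       "diag2 1 (lam powi (i + 1)) = diag2 1 lam ** diag2 1 (lam powi i)"
    using lam_pos by (simp_all add: diag2_mult power_int_add_1')
  with step1.IH show "grid_operator (diag2 (lam powi (i + 1)) 1)"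
    "grid_operator (diag2 1 (lam powi (i + 1)))"
    by (simp_all add: grid_operator_mult grid_operator_diag2I Zomega_scale_Re_Im)
next
  case (step2 i)
  have "diag2 (lam powi (i - 1)) 1 = diag2 (inverse lam) 1 ** diag2 (lam powi i) 1"
       "diag2 1 (lam powi (i - 1)) = diag2 1 (inverse lam) ** diag2 1 (lam powi i)"
    using lam_pos by (simp_all add: diag2_mult power_int_diff field_simps)
  with step2.IH show "grid_operator (diag2 (lam powi (i - 1)) 1)"
    "grid_operator (diag2 1 (lam powi (i - 1)))"
    by (simp_all add: grid_operator_mult grid_operator_diag2I Zomega_scale_Re_Im)
qed

subsection \<open>The field \<open>\<rat>(\<surd>2)\<close> and its conjugation\<close>

lemma sqrt_prime_irrational:
  assumes "prime (p::nat)"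
  shows "sqrt p \<notin> \<rat>"
proof
  assume "sqrt p \<in> \<rat>"
  then obtain m n :: nat where n: "n \<noteq> 0" and sqrt_rat: "\<bar>sqrt p\<bar> = m / n"
    and "coprime m n"
    by (rule Rats_abs_nat_div_natE)
  have "real m = sqrt p * n"
    using n sqrt_rat by (simp add: field_simps)
  then have "real m ^ 2 = real p * real n ^ 2"
    by (simp add: power_mult_distrib)
  then have eq: "m\<^sup>2 = p * n\<^sup>2"
    by (metis of_nat_eq_iff of_nat_mult of_nat_power)
  then have "p dvd m"
    using assms prime_dvd_power by (metis dvd_triv_left)
  then obtain k where "m = p * k" ..
  with eq assms have "n\<^sup>2 = p * k\<^sup>2"
    by (simp add: power2_eq_square prime_gt_0_nat ac_simps)
  then have "p dvd n"
    using assms prime_dvd_power by (metis dvd_triv_left)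
  with \<open>p dvd m\<close> \<open>coprime m n\<close> assms show False
    by (metis coprime_common_divisor not_prime_unit)
qed

definition Qsqrt2 :: "real set" where
  "Qsqrt2 = {of_rat x + of_rat y * sqrt 2 | x y. True}"

lemma of_rat_add_sqrt2_eq_iff:
  "of_rat x + of_rat y * sqrt 2 = of_rat x' + (of_rat y' * sqrt 2 :: real) \<longleftrightarrow> x = x' \<and> y = y'"
proof
  assume eq: "of_rat x + of_rat y * sqrt 2 = of_rat x' + (of_rat y' * sqrt 2 :: real)"
  have "y = y'"
  proof (rule ccontr)
    assume "y \<noteq> y'"
    then have "sqrt 2 = of_rat ((x - x') / (y' - y))"
      using eq by (simp add: of_rat_divide of_rat_diff field_simps)
    then show False
      using sqrt_prime_irrational[of 2] by (metis Rats_of_rat of_nat_numeral two_is_prime_nat)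
  qed
  with eq show "x = x' \<and> y = y'" by simp
qed simp

lemma bul_of_rat_add_sqrt2: "bul (of_rat x + of_rat y * sqrt 2) = of_rat x - of_rat y * sqrt 2"
  unfolding bul_def of_rat_add_sqrt2_eq_iff by auto

lemma bul_one: "bul 1 = 1"
  using bul_of_rat_add_sqrt2[of 1 0] by simp

lemma one_in_Qsqrt2: "1 \<in> Qsqrt2"
  unfolding Qsqrt2_def by (rule CollectI, rule exI[of _ 1], rule exI[of _ 0]) simp

lemma Qsqrt2_mult:
  assumes "u \<in> Qsqrt2" "v \<in> Qsqrt2"
  shows "u * v \<in> Qsqrt2" and "bul (u * v) = bul u * bul v"
proof -
  obtain x y x' y' where
    u: "u = of_rat x + of_rat y * sqrt 2" and v: "v = of_rat x' + of_rat y' * sqrt 2"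
    using assms unfolding Qsqrt2_def by blast
  have uv: "u * v = of_rat (x * x' + 2 * y * y') + of_rat (x * y' + x' * y) * sqrt 2"
    by (simp add: u v of_rat_add of_rat_mult algebra_simps sqrt2_mult_sqrt2)
  then show "u * v \<in> Qsqrt2" unfolding Qsqrt2_def by blast
  show "bul (u * v) = bul u * bul v"
    unfolding uv unfolding u v bul_of_rat_add_sqrt2
    by (simp add: of_rat_add of_rat_mult algebra_simps sqrt2_mult_sqrt2)
qed

lemma Qsqrt2_power_int:
  assumes "u \<in> Qsqrt2" "inverse u \<in> Qsqrt2" "u \<noteq> 0"
  shows "u powi k \<in> Qsqrt2 \<and> bul (u powi k) = bul u powi k"
proof (induction k rule: int_induct[where k = 0])
  case base
  show ?case by (simp add: one_in_Qsqrt2 bul_one)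
next
  case (step1 i)
  then show ?case
    using assms Qsqrt2_mult[of "u powi i" u] by (simp add: power_int_add_1)
next
  case (step2 i)
  have "bul u * bul (inverse u) = 1"
    using assms by (simp add: bul_one flip: Qsqrt2_mult(2))
  then have "bul (inverse u) = inverse (bul u)"
    by (simp add: inverse_unique)
  with step2 show ?case
    using assms Qsqrt2_mult[of "u powi i" "inverse u"] by (simp add: power_int_diff divide_inverse)
qed

lemma Qsqrt2_lam_powi: "lam powi k \<in> Qsqrt2 \<and> bul (lam powi k) = (- inverse lam) powi k"
proof -
  have lam: "lam = of_rat 1 + of_rat 1 * sqrt 2"
    by (simp add: lam_def)
  have inv_lam: "inverse lam = of_rat (-1) + of_rat 1 * sqrt 2"
    by (simp add: inverse_lam)
  have "lam \<in> Qsqrt2" "inverse lam \<in> Qsqrt2"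
    unfolding Qsqrt2_def by (subst lam inv_lam; blast)+
  moreover have "bul lam = - inverse lam"
    by (subst lam, subst bul_of_rat_add_sqrt2) (simp add: inverse_lam)
  ultimately show ?thesis
    using Qsqrt2_power_int[of lam k] lam_pos by simp
qed

lemma Zomega_Re_Im_in_Qsqrt2:
  assumes "z \<in> Zomega"
  shows "Re z \<in> Qsqrt2" "Im z \<in> Qsqrt2"
proof -
  obtain a0 a1 a2 a3 :: int where
    "Re z = of_int a0 + (of_int a1 - of_int a3) * sqrt 2 / 2"
    "Im z = of_int a2 + (of_int a1 + of_int a3) * sqrt 2 / 2"
    using assms by (auto simp: Zomega_iff)
  then have "Re z = of_rat (of_int a0) + of_rat ((of_int a1 - of_int a3) / 2) * sqrt 2"
            "Im z = of_rat (of_int a2) + of_rat ((of_int a1 + of_int a3) / 2) * sqrt 2"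
    by (simp_all add: of_rat_divide of_rat_diff of_rat_add)
  then show "Re z \<in> Qsqrt2" "Im z \<in> Qsqrt2" unfolding Qsqrt2_def by blast+
qed

lemma grid_operator_entries_in_Qsqrt2:
  assumes "grid_operator G"
  shows "\<forall>i j. G $ i $ j \<in> Qsqrt2"
proof -
  have unit_vectors: "1 \<in> Zomega" "\<i> \<in> Zomega"
    unfolding Zomega_iff
    by (rule exI[of _ 1], rule exI[of _ 0], rule exI[of _ 0], rule exI[of _ 0], simp,
        rule exI[of _ 0], rule exI[of _ 0], rule exI[of _ 1], rule exI[of _ 0], simp)
  obtain w v where "w \<in> Zomega" "G *v c2v 1 = c2v w" "v \<in> Zomega" "G *v c2v \<i> = c2v v"
    using assms unit_vectors unfolding grid_operator_def by meson
  then show ?thesis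
    using Zomega_Re_Im_in_Qsqrt2
    by (auto simp: forall_2 c2v_def vec_eq_iff matrix_vector_mult_def sum_2)
qed

lemma mat_bul_diag2_mult_diag2:
  assumes "\<forall>i j. G $ i $ j \<in> Qsqrt2" "a \<in> Qsqrt2" "b \<in> Qsqrt2" "c \<in> Qsqrt2" "d \<in> Qsqrt2"
  shows "mat_bul (diag2 a b ** G ** diag2 c d)
           = diag2 (bul a) (bul b) ** mat_bul G ** diag2 (bul c) (bul d)"
  using assms by (simp add: mat2_eq_iff mat_bul_def Qsqrt2_mult)

theorem lemma5p43:
  fixes G :: "real^2^2" and k :: int
  assumes "special_grid_operator G"
  shows "special_grid_operator (mat_zpow sigma k ** G ** mat_zpow sigma k)
         \<and> mat_bul (mat_zpow sigma k ** G ** mat_zpow sigma k)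
             = mat_zpow (- tau) k ** mat_bul G ** mat_zpow tau k"
proof -
  have grid: "grid_operator G" and det: "det G = 1 \<or> det G = -1"
    using assms unfolding special_grid_operator_def by auto
  let ?M = "diag2 (lam powi k) 1 ** G ** diag2 1 (lam powi (- k))"
  have "grid_operator ?M"
    using grid by (intro grid_operator_mult grid_operator_diag2_lam_powi)
  moreover have "det ?M = det G"
    using lam_pos by (simp add: det_mul det_diag2 power_int_minus)
  ultimately have "special_grid_operator ?M"
    using det unfolding special_grid_operator_def by simp
  moreover have
    "mat_bul ?M = diag2 ((- inverse lam) powi k) 1 ** mat_bul G ** diag2 1 ((- lam) powi k)"
  proof -
    have "(- inverse lam) powi (- k) = (- lam) powi k"
      by (simp add: power_int_minus flip: power_int_inverse)
    then show ?thesis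
      using Qsqrt2_lam_powi[of k] Qsqrt2_lam_powi[of "- k"] grid_operator_entries_in_Qsqrt2[OF grid]
      by (simp add: mat_bul_diag2_mult_diag2 one_in_Qsqrt2 bul_one)
  qed
  ultimately show ?thesis
    by (simp add: sigma_conj_eq minus_tau_conj_eq)
qed

end
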